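(* Let $G$ be a simple complex Lie group with Lie algebra $\mathfrak g$, $\rho\colon G\to\mathrm{GL}(V)$ a faithful irreducible finite-dimensional complex representation with differential $\rho_*$, $T$ a maximal torus of $G$ with Lie algebra $\mathfrak t$. Suppose $g\in T$ and $x\in\mathfrak t$ satisfy $\rho(g)=\rho_*(x)$ in $\mathrm{End}(V)$. Let $e_1,\dots,e_n$ be a basis of $V$ of $T$-weight vectors with characters $\chi_1,\dots,\chi_n\in X^*(T)$. If $\chi_i,\chi_j,\chi_k$ are among these characters and $\chi_i\chi_k=\chi_j^2$, then $\chi_i(g)=\chi_j(g)=\chi_k(g)$.
   Context: Each character $\chi\in X^*(T)$ is identified with the linear form $t^*\in\mathfrak t^*$ satisfying $\chi(\exp(y))=\exp(t^*(y))$ for all $y\in\mathfrak t$; $t^*_l$ denotes the form corresponding to $\chi_l$, so that $\rho_*(x)e_l=t^*_l(x)e_l$. *)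

theory Defs
  imports "HOL-Analysis.Analysis"
begin

text \<open>Concrete model of a rank-r complex torus T = (C^*)^r with Lie algebra t = C^r.
  The rank is the cardinality of the finite index type 'r.\<close>

definition torus :: "(complex ^ 'r) set" where
  "torus = {t. \<forall>s. t $ s \<noteq> 0}"

definition texp :: "complex ^ 'r \<Rightarrow> complex ^ 'r" where
  "texp y = (\<chi> s. exp (y $ s))"

text \<open>The character of T with exponent vector m in X^*(T) = Z^r.\<close>
definition character :: "int ^ 'r \<Rightarrow> complex ^ 'r \<Rightarrow> complex" where
  "character m t = (\<Prod>s\<in>UNIV. (t $ s) powi (m $ s))"

text \<open>The linear form t^* on t identified with the character m:
  character m (texp y) = exp (lieform m y).\<close>
definition lieform :: "int ^ 'r \<Rightarrow> complex ^ 'r \<Rightarrow> complex" where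
  "lieform m y = (\<Sum>s\<in>UNIV. of_int (m $ s) * y $ s)"

end

theory Submission
  imports Defs
begin

text \<open>On the weight vector \<open>e\<^sub>l\<close>, \<open>\<rho>(g)\<close> acts by \<open>\<chi>\<^sub>l(g)\<close> and \<open>\<rho>\<^sub>*(x)\<close> by \<open>t\<^sup>*\<^sub>l(x)\<close>, so
  \<open>\<chi>\<^sub>l(g) = t\<^sup>*\<^sub>l(x)\<close>. The multiplicative relation \<open>\<chi>\<^sub>i \<chi>\<^sub>k = \<chi>\<^sub>j\<^sup>2\<close> among characters is the additive
  relation \<open>w\<^sub>i + w\<^sub>k = 2 w\<^sub>j\<close> among their exponent vectors, which the linear forms inherit.
  Hence \<open>a = \<chi>\<^sub>i(g)\<close>, \<open>b = \<chi>\<^sub>j(g)\<close>, \<open>c = \<chi>\<^sub>k(g)\<close> satisfy both \<open>a + c = 2b\<close> and \<open>ac = b\<^sup>2\<close>,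
  so \<open>(a - b)\<^sup>2 = a\<^sup>2 - a(a + c) + ac = 0\<close>.\<close>

lemma invertible_column_nonzero:
  fixes A :: "'a::field ^ 'n ^ 'm"
  assumes "invertible A"
  shows "column l A \<noteq> 0"
proof
  assume "column l A = 0"
  from assms obtain B where "B ** A = mat 1"
    unfolding invertible_def by blast
  then have indep: "\<forall>c. (\<Sum>l'\<in>UNIV. c l' *s column l' A) = 0 \<longrightarrow> (\<forall>l'. c l' = 0)"
    using matrix_left_invertible_independent_columns by blast
  have "(\<Sum>l'\<in>UNIV. (if l' = l then 1 else 0) *s column l' A)
      = (\<Sum>l'\<in>UNIV. if l' = l then column l' A else 0)"
    by (rule sum.cong) auto
  also have "\<dots> = 0"
    using \<open>column l A = 0\<close> by simp
  finally have "(if l = l then (1::'a) else 0) = 0"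
    by (rule indep[rule_format])
  then show False by simp
qed

lemma character_add:
  assumes "t \<in> torus"
  shows "character (a + b) t = character a t * character b t"
  using assms unfolding character_def torus_def
  by (simp add: power_int_add prod.distrib)

lemma lieform_add: "lieform (a + b) y = lieform a y + lieform b y"
  unfolding lieform_def by (simp add: distrib_right sum.distrib)

lemma character_at_two_on_axis:
  "character m (\<chi> u. if u = s then 2 else 1) = (2::complex) powi (m $ s)"
proof -
  have "character m (\<chi> u. if u = s then 2 else 1)
      = (\<Prod>u\<in>UNIV. if u = s then (2::complex) powi (m $ s) else 1)"
    unfolding character_def by (intro prod.cong) auto
  then show ?thesis by (simp add: prod.delta)
qed

lemma complex_two_powi_inject:
  assumes "(2::complex) powi a = 2 powi b"
  shows "a = b"
proof -
  have "(2::real) powi a = 2 powi b"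
    using arg_cong[OF assms, of norm] by (simp add: norm_power_int)
  then show ?thesis
    using power_int_strict_increasing[of a b "2::real"]
          power_int_strict_increasing[of b a "2::real"]
    by (cases a b rule: linorder_cases) auto
qed

lemma character_inject:
  assumes "\<And>t. t \<in> torus \<Longrightarrow> character a t = character b t"
  shows "a = b"
  unfolding vec_eq_iff
proof
  fix s
  have "(\<chi> u. if u = s then 2 else 1) \<in> (torus :: (complex ^ 'a) set)"
    unfolding torus_def by simp
  from assms[OF this] show "a $ s = b $ s"
    by (simp add: character_at_two_on_axis complex_two_powi_inject)
qed

lemma eq_of_sum_eq_double_of_prod_eq_square:
  fixes a b c :: "'a::idom"
  assumes sum: "a + c = 2 * b" and prod: "a * c = b\<^sup>2"
  shows "a = b \<and> b = c"
proof -
  have "(a - b)\<^sup>2 = a * a - a * (2 * b) + b\<^sup>2"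
    by (simp add: power2_eq_square algebra_simps)
  also have "\<dots> = a * a - a * (a + c) + a * c"
    by (simp only: sum prod)
  also have "\<dots> = 0"
    by (simp add: algebra_simps)
  finally have "a = b" by simp
  with sum show ?thesis by simp
qed

theorem lemma2:
  fixes rho :: "complex ^ 'r \<Rightarrow> complex ^ 'n ^ 'n"
    and drho :: "complex ^ 'r \<Rightarrow> complex ^ 'n ^ 'n"
    and E :: "complex ^ 'n ^ 'n"
    and w :: "'n \<Rightarrow> int ^ 'r"
    and g x :: "complex ^ 'r"
    and i j k :: 'n
  assumes basis: "invertible E"
    and rho_hom: "\<And>t t'. t \<in> torus \<Longrightarrow> t' \<in> torus \<Longrightarrow> rho (t * t') = rho t ** rho t'"
    and rho_weight: "\<And>t l. t \<in> torus \<Longrightarrow>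
                        rho t *v column l E = character (w l) t *s column l E"
    and drho_lin: "\<And>y z. drho (y + z) = drho y + drho z"
    and drho_weight: "\<And>y l. drho y *v column l E = lieform (w l) y *s column l E"
    and g: "g \<in> torus"
    and eq: "rho g = drho x"
    and rel: "\<And>t. t \<in> torus \<Longrightarrow>
                 character (w i) t * character (w k) t = (character (w j) t)\<^sup>2"
  shows "character (w i) g = character (w j) g \<and> character (w j) g = character (w k) g"
proof -
  have char_eq_lieform: "character (w l) g = lieform (w l) x" for l
    using rho_weight[OF g, of l] drho_weight[of x l] eq invertible_column_nonzero[OF basis, of l]
    by simp
  have "w i + w k = w j + w j"
    using rel by (intro character_inject) (simp only: character_add power2_eq_square)
  then have "character (w i) g + character (w k) g = 2 * character (w j) g"
    by (metis char_eq_lieform lieform_add mult_2)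
  then show ?thesis
    using rel[OF g]
    by (rule eq_of_sum_eq_double_of_prod_eq_square)
qed

end
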